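(* Let ${\bf R}=(R_1,\dots,R_d)\in\mathbb R_+^d$, $p=\max\{\frac12,R_1,\dots,R_d\}$, $g({\bf R})=\frac{1}{1/R_1+\cdots+1/R_d}$, $b_{\bf R}=\big(\sum_{j=1}^d(1/2)^{2R_j}\big)^{1/(2p)}$, and for $m\in\mathbb N$ let $C(m,{\bf R},d)=\#\{{\bf k}\in\mathbb Z^d:\sum_{j=1}^d|k_j|^{2R_j}\le m^{2p}\}$. Then for every $m\in\mathbb N$, $$\big((m-b_{\bf R})_+\big)^{p/g({\bf R})}\mathrm{vol}(B^d_{2{\bf R}})\le C(m,{\bf R},d)\le (m+b_{\bf R})^{p/g({\bf R})}\mathrm{vol}(B^d_{2{\bf R}}),$$ where $a_+=\max\{a,0\}$.
   Context: $B^d_{2{\bf R}}=\{{\bf x}\in\mathbb R^d:\sum_{j=1}^d|x_j|^{2R_j}\le1\}$ and vol is Lebesgue measure on $\mathbb R^d$. *)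

theory Defs
  imports "HOL-Analysis.Analysis"
begin

text \<open>Exponent vector R = (R_1,...,R_d), indexed by a finite type 'n (d = CARD('n)).\<close>

definition pR :: "real^'n \<Rightarrow> real" where
  "pR R = Max (insert (1/2) {R $ j | j. True})"

definition gR :: "real^'n \<Rightarrow> real" where
  "gR R = 1 / (\<Sum>j\<in>UNIV. 1 / R $ j)"

definition bR :: "real^'n \<Rightarrow> real" where
  "bR R = (\<Sum>j\<in>UNIV. (1/2) powr (2 * R $ j)) powr (1 / (2 * pR R))"

definition ballR :: "real^'n \<Rightarrow> (real^'n) set" where
  "ballR R = {x. (\<Sum>j\<in>UNIV. \<bar>x $ j\<bar> powr (2 * R $ j)) \<le> 1}"

definition CR :: "nat \<Rightarrow> real^'n \<Rightarrow> nat" where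
  "CR m R = card {k :: int^'n. (\<Sum>j\<in>UNIV. \<bar>real_of_int (k $ j)\<bar> powr (2 * R $ j))
                                 \<le> real m powr (2 * pR R)}"

end

theory Submission
  imports Defs
begin

text \<open>
  With \<open>N(x) = (\<Sum>j. \<bar>x\<^sub>j\<bar>^(2 R\<^sub>j))^(1/(2p))\<close>, \<open>C(m,R,d)\<close> counts the integer points with
  \<open>N \<le> m\<close>, and \<open>B_2R = {N \<le> 1}\<close>. As every \<open>R\<^sub>j \<le> p\<close> and \<open>p \<ge> 1/2\<close>, \<open>N\<close> satisfies the
  triangle inequality (\<open>u \<mapsto> u^(R\<^sub>j/p)\<close> is subadditive, then Minkowski in \<open>\<ell>^(2p)\<close>); \<open>N \<le> b_R\<close>
  on the unit cube centred at the origin; and \<open>{N \<le> t}\<close> is the image of \<open>B_2R\<close> under the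
  stretch \<open>x\<^sub>j \<mapsto> t^(p/R\<^sub>j) x\<^sub>j\<close>, of volume \<open>t^(p/g(R)) vol(B_2R)\<close>. Hence the unit cubes
  centred at the counted lattice points are disjoint and lie in \<open>{N \<le> m + b_R}\<close>, and they
  cover \<open>{N \<le> m - b_R}\<close>.
\<close>

lemma convex_on_powr_nonneg:
  fixes s :: real
  assumes "1 \<le> s"
  shows "convex_on {0..} (\<lambda>x. x powr s)"
proof (rule convex_onI)
  fix t u v :: real
  assume t: "0 < t" "t < 1" and uv: "u \<in> {0..}" "v \<in> {0..}"
  have shrink: "c powr s \<le> c" if "0 \<le> c" "c \<le> 1" for c :: real
    using that powr_le_one_le[of c s] assms by (cases "c = 0") auto
  consider "0 < u" "0 < v" | "u = 0" | "v = 0"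
    using uv by fastforce
  then show "((1 - t) *\<^sub>R u + t *\<^sub>R v) powr s \<le> (1 - t) * u powr s + t * v powr s"
  proof cases
    case 1
    then show ?thesis
      using convex_onD[OF powr_convex[OF assms], of t u v] t by simp
  next
    case 2
    have "(t * v) powr s = t powr s * v powr s"
      using t uv by (simp add: powr_mult)
    also have "\<dots> \<le> t * v powr s"
      using shrink[of t] t by (intro mult_right_mono) auto
    finally show ?thesis using 2 by simp
  next
    case 3
    have "((1 - t) * u) powr s = (1 - t) powr s * u powr s"
      using t uv by (simp add: powr_mult)
    also have "\<dots> \<le> (1 - t) * u powr s"
      using shrink[of "1 - t"] t by (intro mult_right_mono) auto
    finally show ?thesis using 3 by simp
  qed
qed simp

lemma powr_add_le_add_powr:
  fixes u v q :: real
  assumes "0 \<le> u" "0 \<le> v" "0 < q" "q \<le> 1"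
  shows "(u + v) powr q \<le> u powr q + v powr q"
proof (cases "u + v = 0")
  case True
  then show ?thesis using assms by auto
next
  case False
  then have w: "u + v > 0" using assms by auto
  have grow: "c \<le> c powr q" if "0 \<le> c" "c \<le> 1" for c :: real
    using powr_mono'[of q 1 c] that assms by auto
  have "1 = u / (u + v) + v / (u + v)"
    using w by (simp add: add_divide_distrib[symmetric])
  also have "\<dots> \<le> (u / (u + v)) powr q + (v / (u + v)) powr q"
    using w assms by (intro add_mono grow) auto
  also have "\<dots> = (u powr q + v powr q) / (u + v) powr q"
    by (simp add: powr_divide add_divide_distrib)
  finally show ?thesis using w by (simp add: field_simps)
qed

lemma root_powr_le_iff:
  fixes a t s :: real
  assumes "0 \<le> a" "0 \<le> t" "0 < s"
  shows "a powr (1 / s) \<le> t \<longleftrightarrow> a \<le> t powr s"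
proof
  assume "a powr (1 / s) \<le> t"
  then have "(a powr (1 / s)) powr s \<le> t powr s"
    using assms by (intro powr_mono2) auto
  then show "a \<le> t powr s" using assms by (simp add: powr_powr)
next
  assume "a \<le> t powr s"
  then have "a powr (1 / s) \<le> (t powr s) powr (1 / s)"
    using assms by (intro powr_mono2) auto
  then show "a powr (1 / s) \<le> t" using assms by (simp add: powr_powr)
qed

lemma Minkowski_sum_powr:
  fixes a b :: "'i \<Rightarrow> real"
  assumes fin: "finite I"
    and a: "\<And>i. i \<in> I \<Longrightarrow> 0 \<le> a i" and b: "\<And>i. i \<in> I \<Longrightarrow> 0 \<le> b i"
    and s: "1 \<le> s"
  shows "(\<Sum>i\<in>I. (a i + b i) powr s) powr (1 / s)
     \<le> (\<Sum>i\<in>I. a i powr s) powr (1 / s) + (\<Sum>i\<in>I. b i powr s) powr (1 / s)"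
proof -
  define A where "A = (\<Sum>i\<in>I. a i powr s) powr (1 / s)"
  define B where "B = (\<Sum>i\<in>I. b i powr s) powr (1 / s)"
  have sum_A: "(\<Sum>i\<in>I. a i powr s) = A powr s" and sum_B: "(\<Sum>i\<in>I. b i powr s) = B powr s"
    unfolding A_def B_def using s by (simp_all add: powr_powr sum_nonneg)
  have vanish: "(\<Sum>i\<in>I. c i powr s) = 0 \<Longrightarrow> i \<in> I \<Longrightarrow> c i = 0" for c :: "'i \<Rightarrow> real" and i
    using sum_nonneg_eq_0_iff[OF fin, of "\<lambda>i. c i powr s"] by auto
  consider "A = 0" | "B = 0" | "0 < A" "0 < B"
    unfolding A_def B_def by fastforce
  then show ?thesis
  proof cases
    case 1
    then have "\<And>i. i \<in> I \<Longrightarrow> a i = 0" using vanish[of a] sum_A s by simp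
    then show ?thesis using 1 unfolding A_def B_def by simp
  next
    case 2
    then have "\<And>i. i \<in> I \<Longrightarrow> b i = 0" using vanish[of b] sum_B s by simp
    then show ?thesis using 2 unfolding A_def B_def by simp
  next
    case 3
    \<comment> \<open>\<open>a + b\<close> is \<open>A + B\<close> times a convex combination of the normalised vectors \<open>a / A\<close> and \<open>b / B\<close>.\<close>
    define lam where "lam = B / (A + B)"
    have lam: "0 \<le> lam" "lam \<le> 1" "1 - lam = A / (A + B)"
      using 3 unfolding lam_def by (auto simp: field_simps)
    have split: "a i + b i = (A + B) * ((1 - lam) * (a i / A) + lam * (b i / B))" for i
    proof -
      have "(A + B) * ((1 - lam) * (a i / A)) = a i"
        using 3 by (simp add: lam(3))
      moreover have "(A + B) * (lam * (b i / B)) = b i"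
        using 3 by (simp add: lam_def)
      ultimately show ?thesis by (simp add: distrib_left)
    qed
    have "(\<Sum>i\<in>I. (a i + b i) powr s)
        = (\<Sum>i\<in>I. (A + B) powr s * ((1 - lam) * (a i / A) + lam * (b i / B)) powr s)"
      using 3 a b lam by (intro sum.cong refl, subst split) (simp add: powr_mult)
    also have "\<dots> \<le> (\<Sum>i\<in>I. (A + B) powr s * ((1 - lam) * (a i / A) powr s + lam * (b i / B) powr s))"
      using convex_onD[OF convex_on_powr_nonneg[OF s] lam(1,2), of "a _ / A" "b _ / B"] a b 3
      by (intro sum_mono mult_left_mono) auto
    also have "\<dots> = (A + B) powr s * (\<Sum>i\<in>I. (1 - lam) * (a i / A) powr s + lam * (b i / B) powr s)"
      by (simp add: sum_distrib_left)
    also have "\<dots> = (A + B) powr s * ((1 - lam) * ((\<Sum>i\<in>I. a i powr s) / A powr s)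
                                    + lam * ((\<Sum>i\<in>I. b i powr s) / B powr s))"
      by (simp add: sum.distrib powr_divide sum_distrib_left sum_divide_distrib)
    also have "\<dots> = (A + B) powr s"
      using 3 by (simp add: sum_A sum_B)
    finally show ?thesis
      using 3 s root_powr_le_iff[of "\<Sum>i\<in>I. (a i + b i) powr s" "A + B" s]
      unfolding A_def B_def by (simp add: sum_nonneg)
  qed
qed

lemma sum_abs_powr_root_triangle:
  fixes x y e :: "'i \<Rightarrow> real"
  assumes fin: "finite I" and e: "\<And>i. i \<in> I \<Longrightarrow> 0 < e i" "\<And>i. i \<in> I \<Longrightarrow> e i \<le> s"
    and s: "1 \<le> s"
  shows "(\<Sum>i\<in>I. \<bar>x i + y i\<bar> powr e i) powr (1 / s)
     \<le> (\<Sum>i\<in>I. \<bar>x i\<bar> powr e i) powr (1 / s) + (\<Sum>i\<in>I. \<bar>y i\<bar> powr e i) powr (1 / s)"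
proof -
  define q where "q i = e i / s" for i
  have q: "0 < q i" "q i \<le> 1" if "i \<in> I" for i
    unfolding q_def using e[OF that] s by auto
  have rewrite: "\<bar>z\<bar> powr e i = (\<bar>z\<bar> powr q i) powr s" for z i
    unfolding q_def using s by (simp add: powr_powr)
  have "(\<Sum>i\<in>I. \<bar>x i + y i\<bar> powr e i) \<le> (\<Sum>i\<in>I. (\<bar>x i\<bar> powr q i + \<bar>y i\<bar> powr q i) powr s)"
  proof (rule sum_mono)
    fix i assume i: "i \<in> I"
    have "\<bar>x i + y i\<bar> powr q i \<le> (\<bar>x i\<bar> + \<bar>y i\<bar>) powr q i"
      using q[OF i] by (intro powr_mono2) auto
    also have "\<dots> \<le> \<bar>x i\<bar> powr q i + \<bar>y i\<bar> powr q i"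
      using q[OF i] by (intro powr_add_le_add_powr) auto
    finally show "\<bar>x i + y i\<bar> powr e i \<le> (\<bar>x i\<bar> powr q i + \<bar>y i\<bar> powr q i) powr s"
      unfolding rewrite using s by (intro powr_mono2) auto
  qed
  then have "(\<Sum>i\<in>I. \<bar>x i + y i\<bar> powr e i) powr (1 / s)
      \<le> (\<Sum>i\<in>I. (\<bar>x i\<bar> powr q i + \<bar>y i\<bar> powr q i) powr s) powr (1 / s)"
    using s by (intro powr_mono2) (auto intro: sum_nonneg)
  also have "\<dots> \<le> (\<Sum>i\<in>I. (\<bar>x i\<bar> powr q i) powr s) powr (1 / s) + (\<Sum>i\<in>I. (\<bar>y i\<bar> powr q i) powr s) powr (1 / s)"
    using fin s by (intro Minkowski_sum_powr) auto
  finally show ?thesis unfolding rewrite .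
qed

definition real_of_int_vec :: "int^'n \<Rightarrow> real^'n" where
  "real_of_int_vec k = (\<chi> j. real_of_int (k $ j))"

lemma measure_centred_unit_cube:
  fixes v :: "real^'n"
  shows "measure lebesgue (cbox (v - (\<chi> j. 1/2)) (v + (\<chi> j. 1/2))) = 1"
    and "measure lebesgue (box (v - (\<chi> j. 1/2)) (v + (\<chi> j. 1/2))) = 1"
proof -
  have "0 \<le> (\<chi> j. 1/2) \<bullet> b" "(2 * (\<chi> j. 1/2)) \<bullet> b = (1::real)"
    if "b \<in> Basis" for b :: "real^'n"
    using that by (auto simp: Basis_vec_def inner_axis)
  then show "measure lebesgue (cbox (v - (\<chi> j. 1/2)) (v + (\<chi> j. 1/2))) = 1"
    and "measure lebesgue (box (v - (\<chi> j. 1/2)) (v + (\<chi> j. 1/2))) = 1"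
    by (simp_all add: measure_lborel_cbox_eq measure_lborel_box_eq inner_diff_left inner_add_left)
qed

lemma mem_centred_unit_cube_iff:
  fixes v x :: "real^'n"
  shows "x \<in> cbox (v - (\<chi> j. 1/2)) (v + (\<chi> j. 1/2)) \<longleftrightarrow> (\<forall>j. \<bar>x $ j - v $ j\<bar> \<le> 1/2)"
    and "x \<in> box (v - (\<chi> j. 1/2)) (v + (\<chi> j. 1/2)) \<longleftrightarrow> (\<forall>j. \<bar>x $ j - v $ j\<bar> < 1/2)"
proof -
  have "(a - 1/2 \<le> t \<and> t \<le> a + 1/2) \<longleftrightarrow> \<bar>t - a\<bar> \<le> 1/2"
    and "(a - 1/2 < t \<and> t < a + 1/2) \<longleftrightarrow> \<bar>t - a\<bar> < 1/2" for a t :: real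
    by linarith+
  then show "x \<in> cbox (v - (\<chi> j. 1/2)) (v + (\<chi> j. 1/2)) \<longleftrightarrow> (\<forall>j. \<bar>x $ j - v $ j\<bar> \<le> 1/2)"
    and "x \<in> box (v - (\<chi> j. 1/2)) (v + (\<chi> j. 1/2)) \<longleftrightarrow> (\<forall>j. \<bar>x $ j - v $ j\<bar> < 1/2)"
    by (simp_all only: mem_box_cart vector_minus_component vector_add_component vec_lambda_beta)
qed

lemma card_le_measure_if_cubes_inside:
  fixes K :: "(int^'n) set" and S :: "(real^'n) set"
  assumes fin: "finite K" and S: "S \<in> lmeasurable"
    and inside: "\<And>k x. k \<in> K \<Longrightarrow> (\<And>j. \<bar>x $ j - real_of_int (k $ j)\<bar> < 1/2) \<Longrightarrow> x \<in> S"
  shows "real (card K) \<le> measure lebesgue S"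
proof -
  define cube where "cube k = box (real_of_int_vec k - (\<chi> j. 1/2)) (real_of_int_vec k + (\<chi> j. 1/2))"
    for k :: "int^'n"
  have mem_cube: "x \<in> cube k \<longleftrightarrow> (\<forall>j. \<bar>x $ j - real_of_int (k $ j)\<bar> < 1/2)" for x k
    unfolding cube_def mem_centred_unit_cube_iff by (simp add: real_of_int_vec_def)
  have disjoint: "disjnt (cube k) (cube k')" if "k \<noteq> k'" for k k'
    unfolding disjnt_iff
  proof (intro allI notI, elim conjE)
    fix x assume "x \<in> cube k" "x \<in> cube k'"
    then have near: "\<bar>x $ j - real_of_int (k $ j)\<bar> < 1/2" "\<bar>x $ j - real_of_int (k' $ j)\<bar> < 1/2" for j
      unfolding mem_cube by blast+
    have "k $ j = k' $ j" for j
    proof -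
      have "real_of_int \<bar>k $ j - k' $ j\<bar> < 1"
        using near[of j] by linarith
      then show ?thesis by (simp only: of_int_less_1_iff zabs_less_one_iff)
    qed
    then have "k = k'" by (simp add: vec_eq_iff)
    with that show False ..
  qed
  have "real (card K) = (\<Sum>k\<in>K. measure lebesgue (cube k))"
    unfolding cube_def measure_centred_unit_cube by simp
  also have "\<dots> = measure lebesgue (\<Union>k\<in>K. cube k)"
    using fin disjoint by (intro measure_UNION'[symmetric]) (auto simp: cube_def pairwise_def)
  also have "\<dots> \<le> measure lebesgue S"
  proof (rule measure_mono_fmeasurable[OF _ _ S])
    show "(\<Union>k\<in>K. cube k) \<subseteq> S"
      using inside by (auto simp: mem_cube)
  qed (use fin in \<open>auto simp: cube_def\<close>)
  finally show ?thesis .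
qed

lemma measure_le_card_if_covered_by_cubes:
  fixes K :: "(int^'n) set" and S :: "(real^'n) set"
  assumes fin: "finite K" and S: "S \<in> sets lebesgue"
    and covered: "\<And>x. x \<in> S \<Longrightarrow> \<exists>k\<in>K. \<forall>j. \<bar>x $ j - real_of_int (k $ j)\<bar> \<le> 1/2"
  shows "measure lebesgue S \<le> real (card K)"
proof -
  define cube where "cube k = cbox (real_of_int_vec k - (\<chi> j. 1/2)) (real_of_int_vec k + (\<chi> j. 1/2))"
    for k :: "int^'n"
  have "S \<subseteq> (\<Union>k\<in>K. cube k)"
  proof
    fix x assume "x \<in> S"
    with covered obtain k where "k \<in> K" and k: "\<forall>j. \<bar>x $ j - real_of_int (k $ j)\<bar> \<le> 1/2"
      by blast
    moreover have "x \<in> cube k"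
      using k unfolding cube_def mem_centred_unit_cube_iff by (simp add: real_of_int_vec_def)
    ultimately show "x \<in> (\<Union>k\<in>K. cube k)" by blast
  qed
  then have "measure lebesgue S \<le> measure lebesgue (\<Union>k\<in>K. cube k)"
    using fin S by (intro measure_mono_fmeasurable) (auto simp: cube_def)
  also have "\<dots> \<le> (\<Sum>k\<in>K. measure lebesgue (cube k))"
    using fin by (intro measure_UNION_le) (auto simp: cube_def)
  also have "\<dots> = real (card K)"
    unfolding cube_def measure_centred_unit_cube by simp
  finally show ?thesis .
qed

lemma lattice_count_le_measure:
  fixes N :: "real^'n \<Rightarrow> real"
  assumes subadd: "\<And>x y. N (x + y) \<le> N x + N y"
    and cube: "\<And>y. (\<And>j. \<bar>y $ j\<bar> \<le> 1/2) \<Longrightarrow> N y \<le> b"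
    and meas: "{x. N x \<le> t + b} \<in> lmeasurable"
  shows "finite {k. N (real_of_int_vec k) \<le> t}"
    and "real (card {k. N (real_of_int_vec k) \<le> t}) \<le> measure lebesgue {x. N x \<le> t + b}"
proof -
  define K where "K = {k. N (real_of_int_vec k) \<le> t}"
  define S where "S = {x. N x \<le> t + b}"
  have packing: "real (card K') \<le> measure lebesgue S" if "finite K'" "K' \<subseteq> K" for K'
  proof (rule card_le_measure_if_cubes_inside[OF that(1)])
    show "S \<in> lmeasurable" using meas unfolding S_def .
    fix k x assume k: "k \<in> K'" and x: "\<And>j. \<bar>x $ j - real_of_int (k $ j)\<bar> < 1/2"
    have "N x = N (real_of_int_vec k + (x - real_of_int_vec k))" by simp
    also have "\<dots> \<le> N (real_of_int_vec k) + N (x - real_of_int_vec k)" by (rule subadd)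
    also have "\<dots> \<le> t + b"
      using k that(2) x by (intro add_mono cube) (auto simp: K_def real_of_int_vec_def less_imp_le)
    finally show "x \<in> S" unfolding S_def by simp
  qed
  show fin: "finite K"
  proof (rule ccontr)
    assume "infinite K"
    then obtain K' where "K' \<subseteq> K" "finite K'" "card K' = nat \<lceil>measure lebesgue S\<rceil> + 1"
      using infinite_arbitrarily_large by blast
    then have "measure lebesgue S < real (card K')"
      using real_nat_ceiling_ge[of "measure lebesgue S"] by linarith
    with packing \<open>K' \<subseteq> K\<close> \<open>finite K'\<close> show False by fastforce
  qed
  show "real (card K) \<le> measure lebesgue S"
    using packing[OF fin] by simp
qed

lemma measure_le_lattice_count:
  fixes N :: "real^'n \<Rightarrow> real"
  assumes subadd: "\<And>x y. N (x + y) \<le> N x + N y"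
    and cube: "\<And>y. (\<And>j. \<bar>y $ j\<bar> \<le> 1/2) \<Longrightarrow> N y \<le> b"
    and fin: "finite {k. N (real_of_int_vec k) \<le> t}"
    and meas: "{x. N x \<le> t - b} \<in> sets lebesgue"
  shows "measure lebesgue {x. N x \<le> t - b} \<le> real (card {k. N (real_of_int_vec k) \<le> t})"
proof (rule measure_le_card_if_covered_by_cubes[OF fin meas])
  fix x assume x: "x \<in> {x. N x \<le> t - b}"
  define k where "k = (\<chi> j. \<lfloor>x $ j + 1/2\<rfloor>)"
  have near: "\<bar>x $ j - real_of_int (k $ j)\<bar> \<le> 1/2" for j
  proof -
    have "real_of_int \<lfloor>x $ j + 1/2\<rfloor> \<le> x $ j + 1/2" "x $ j + 1/2 < real_of_int \<lfloor>x $ j + 1/2\<rfloor> + 1"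
      by linarith+
    then show ?thesis unfolding k_def vec_lambda_beta abs_le_iff by linarith
  qed
  have "N (real_of_int_vec k) = N (x + (real_of_int_vec k - x))" by simp
  also have "\<dots> \<le> N x + N (real_of_int_vec k - x)" by (rule subadd)
  also have "\<dots> \<le> t"
    using x near cube[of "real_of_int_vec k - x"] by (simp add: real_of_int_vec_def abs_minus_commute)
  finally show "\<exists>k\<in>{k. N (real_of_int_vec k) \<le> t}. \<forall>j. \<bar>x $ j - real_of_int (k $ j)\<bar> \<le> 1/2"
    using near by blast
qed

definition aniso_norm :: "real^'n \<Rightarrow> real^'n \<Rightarrow> real" where
  "aniso_norm R x = (\<Sum>j\<in>UNIV. \<bar>x $ j\<bar> powr (2 * R $ j)) powr (1 / (2 * pR R))"

lemma
  fixes R :: "real^'n"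
  shows pR_ge_half: "1/2 \<le> pR R"
    and component_le_pR: "R $ j \<le> pR R"
proof -
  have "{R $ j | j. True} = range (\<lambda>j. R $ j)" by auto
  then have fin: "finite (insert (1/2) {R $ j | j. True})" by simp
  show "1/2 \<le> pR R" "R $ j \<le> pR R"
    unfolding pR_def by (rule Max_ge[OF fin], blast)+
qed

lemma aniso_norm_le_iff:
  fixes R :: "real^'n"
  assumes "0 \<le> t"
  shows "aniso_norm R x \<le> t \<longleftrightarrow> (\<Sum>j\<in>UNIV. \<bar>x $ j\<bar> powr (2 * R $ j)) \<le> t powr (2 * pR R)"
  unfolding aniso_norm_def using assms pR_ge_half[of R]
  by (intro root_powr_le_iff) (auto intro: sum_nonneg)

lemma aniso_norm_triangle:
  fixes R :: "real^'n"
  assumes "\<And>j. 0 < R $ j"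
  shows "aniso_norm R (x + y) \<le> aniso_norm R x + aniso_norm R y"
  unfolding aniso_norm_def
  using sum_abs_powr_root_triangle[of UNIV "\<lambda>j. 2 * R $ j" "2 * pR R" "\<lambda>j. x $ j" "\<lambda>j. y $ j"]
    assms component_le_pR[of R] pR_ge_half[of R]
  by fastforce

lemma aniso_norm_le_bR:
  fixes R :: "real^'n"
  assumes "\<And>j. 0 < R $ j" and "\<And>j. \<bar>y $ j\<bar> \<le> 1/2"
  shows "aniso_norm R y \<le> bR R"
  unfolding aniso_norm_def bR_def using assms pR_ge_half[of R]
  by (intro powr_mono2 sum_mono) (auto intro: sum_nonneg less_imp_le)

lemma ballR_eq_aniso_norm_le_one: "ballR R = {x. aniso_norm R x \<le> 1}"
  unfolding ballR_def using aniso_norm_le_iff[of 1 R] by simp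

lemma ballR_borel: "ballR (R :: real^'n) \<in> sets borel"
proof -
  have "{x \<in> space borel. (\<Sum>j\<in>UNIV. \<bar>x $ j\<bar> powr (2 * R $ j)) \<le> 1} \<in> sets borel"
    by measurable
  then show ?thesis unfolding ballR_def by simp
qed

lemma ballR_lmeasurable:
  fixes R :: "real^'n"
  assumes pos: "\<And>j. 0 < R $ j"
  shows "ballR R \<in> lmeasurable"
proof (rule bounded_set_imp_lmeasurable)
  have "ballR R \<subseteq> cbox (\<chi> j. -1) (\<chi> j. 1)"
  proof
    fix x assume x: "x \<in> ballR R"
    have "\<bar>x $ j\<bar> \<le> 1" for j
    proof (rule ccontr)
      assume "\<not> \<bar>x $ j\<bar> \<le> 1"
      then have "1 < \<bar>x $ j\<bar> powr (2 * R $ j)" using pos[of j] by simp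
      also have "\<dots> \<le> (\<Sum>j\<in>UNIV. \<bar>x $ j\<bar> powr (2 * R $ j))"
        by (rule member_le_sum) auto
      finally show False using x unfolding ballR_def by simp
    qed
    then show "x \<in> cbox (\<chi> j. -1) (\<chi> j. 1)" by (auto simp: mem_box_cart abs_le_iff)
  qed
  then show "bounded (ballR R)" using bounded_cbox bounded_subset by blast
  show "ballR R \<in> sets lebesgue"
    using ballR_borel[of R] by (intro sets_completionI_sets) simp
qed

lemma aniso_norm_sublevel_eq_stretch:
  fixes R :: "real^'n"
  assumes pos: "\<And>j. 0 < R $ j" and t: "0 < t"
  shows "{x. aniso_norm R x \<le> t} = (\<lambda>x. \<chi> k. t powr (pR R / R $ k) * x $ k) ` ballR R"
proof -
  define c where "c k = t powr (pR R / R $ k)" for k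
  have c: "0 < c k" for k unfolding c_def using t by simp
  have homogeneous: "(\<Sum>j\<in>UNIV. \<bar>c j * z $ j\<bar> powr (2 * R $ j)) = t powr (2 * pR R) * (\<Sum>j\<in>UNIV. \<bar>z $ j\<bar> powr (2 * R $ j))"
    for z :: "real^'n"
  proof -
    have "\<bar>c j * z $ j\<bar> powr (2 * R $ j) = t powr (2 * pR R) * \<bar>z $ j\<bar> powr (2 * R $ j)" for j
      unfolding c_def using t pos[of j] by (simp add: abs_mult powr_mult powr_powr mult.commute)
    then show ?thesis by (simp add: sum_distrib_left)
  qed
  have in_stretched_ball: "aniso_norm R (\<chi> k. c k * z $ k) \<le> t \<longleftrightarrow> z \<in> ballR R" for z
    unfolding aniso_norm_le_iff[OF less_imp_le[OF t]] ballR_def using homogeneous[of z] t by simp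
  show ?thesis
  proof (intro set_eqI iffI)
    fix x assume x: "x \<in> {x. aniso_norm R x \<le> t}"
    define z where "z = (\<chi> k. x $ k / c k)"
    have xz: "x = (\<chi> k. c k * z $ k)"
      using c by (simp add: z_def vec_eq_iff less_imp_neq[symmetric])
    with x in_stretched_ball have "z \<in> ballR R" by auto
    with xz show "x \<in> (\<lambda>x. \<chi> k. t powr (pR R / R $ k) * x $ k) ` ballR R"
      unfolding c_def by blast
  qed (use in_stretched_ball in \<open>auto simp: c_def\<close>)
qed

lemma measure_aniso_norm_sublevel:
  fixes R :: "real^'n"
  assumes pos: "\<And>j. 0 < R $ j" and t: "0 < t"
  shows "{x. aniso_norm R x \<le> t} \<in> lmeasurable"
    and "measure lebesgue {x. aniso_norm R x \<le> t} = t powr (pR R / gR R) * measure lebesgue (ballR R)"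
proof -
  have "(\<Prod>k\<in>UNIV. t powr (pR R / R $ k)) = t powr (pR R / gR R)"
    unfolding gR_def using t by (simp add: powr_sum sum_distrib_left)
  then show "{x. aniso_norm R x \<le> t} \<in> lmeasurable"
    and "measure lebesgue {x. aniso_norm R x \<le> t} = t powr (pR R / gR R) * measure lebesgue (ballR R)"
    unfolding aniso_norm_sublevel_eq_stretch[OF pos t] measure_stretch[OF ballR_lmeasurable[OF pos]]
    by (simp_all add: measurable_stretch[OF ballR_lmeasurable[OF pos]])
qed

lemma CR_eq_card_aniso_norm_le: "CR m (R :: real^'n) = card {k. aniso_norm R (real_of_int_vec k) \<le> real m}"
  unfolding CR_def aniso_norm_le_iff[OF of_nat_0_le_iff] by (simp add: real_of_int_vec_def)

theorem mainTheorem9: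
  fixes R :: "real^'n" and m :: nat
  assumes "\<And>j. R $ j > 0"
    and "m \<ge> 1"
  shows "(max (real m - bR R) 0) powr (pR R / gR R) * measure lborel (ballR R) \<le> real (CR m R)
       \<and> real (CR m R) \<le> (real m + bR R) powr (pR R / gR R) * measure lborel (ballR R)"
proof -
  note pos = assms(1)
  note subadd = aniso_norm_triangle[OF pos] and cube = aniso_norm_le_bR[OF pos]
  have "0 \<le> bR R" unfolding bR_def by simp
  then have upper_radius: "0 < real m + bR R" using assms(2) by linarith
  note upper = lattice_count_le_measure[OF subadd cube measure_aniso_norm_sublevel(1)[OF pos upper_radius]]
  have upper_bound: "real (CR m R) \<le> (real m + bR R) powr (pR R / gR R) * measure lebesgue (ballR R)"
    using upper(2) unfolding CR_eq_card_aniso_norm_le measure_aniso_norm_sublevel(2)[OF pos upper_radius] .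
  have lower_bound: "(max (real m - bR R) 0) powr (pR R / gR R) * measure lebesgue (ballR R) \<le> real (CR m R)"
  proof (cases "real m - bR R \<le> 0")
    case False
    then have lower_radius: "0 < real m - bR R" by simp
    note lower_sublevel = measure_aniso_norm_sublevel[OF pos lower_radius]
    show ?thesis
      using measure_le_lattice_count[OF subadd cube upper(1) fmeasurableD[OF lower_sublevel(1)]] False
      unfolding lower_sublevel(2) CR_eq_card_aniso_norm_le by simp
  qed simp
  have "measure lborel (ballR R) = measure lebesgue (ballR R)"
    using ballR_borel[of R] by simp
  then show ?thesis
    using lower_bound upper_bound by simp
qed

end
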